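(* Let $(H,L_H)$ be a right-resolving, regular and follower-separated labeled graph, and let $C$ be a terminal component in $H$. For each $v \in C$ there is a finite path $\gamma$ in $H$ such that $t_H(\gamma) = v$ and the word $L_H(\gamma)$ is synchronizing for $L_H(X_H)$.
   Context: A labeled graph $(H,L_H)$: finite directed graph (vertices $V_H$, edges $E_H$, source/terminal maps $s_H,t_H$) without sinks or sources, labeling $L_H:E_H\to A$, edge shift $X_H$; $L_H$ acts coordinatewise; $Y=L_H(X_H)$. Right-resolving: distinct edges with the same source have distinct labels. $f_H(v)=\{L_H(x): x$ a right-infinite path starting at $v\}$; for $y\in Y$, $F(y)=\{w\in Y[0,\infty): y_{(-\infty,-1]}w\in Y\}$ with $Y[0,\infty)=\{y_{[0,\infty)}:y\in Y\}$. A vertex $v$ is regular if there is $z\in X_H$ whose edge $z_{-1}$ ends at $v$ with $f_H(v)=F(L_H(z))$; the graph is regular if all vertices are. Follower-separated: $f_H(v)=f_H(w)\Rightarrow v=w$. Components: classes of mutually reachable recurrent vertices (a vertex is recurrent if there is a path from it to itself); a component $C$ is terminal if no path leads from $C$ to a different component. A word $w$ of a subshift $Y$ is synchronizing if whenever $u,v$ are words with $uw$ and $wv$ words of $Y$, then $uwv$ is a word of $Y$. *)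

theory Defs
  imports Main
begin

definition labeled_graph ::
  "'v set \<Rightarrow> 'e set \<Rightarrow> ('e \<Rightarrow> 'v) \<Rightarrow> ('e \<Rightarrow> 'v) \<Rightarrow> ('e \<Rightarrow> 'a) \<Rightarrow> bool" where
  "labeled_graph V E s t L \<longleftrightarrow> finite V \<and> finite E \<and>
     (\<forall>e\<in>E. s e \<in> V \<and> t e \<in> V) \<and>
     (\<forall>v\<in>V. (\<exists>e\<in>E. s e = v) \<and> (\<exists>e\<in>E. t e = v))"

definition edge_shift :: "'e set \<Rightarrow> ('e \<Rightarrow> 'v) \<Rightarrow> ('e \<Rightarrow> 'v) \<Rightarrow> (int \<Rightarrow> 'e) set" where
  "edge_shift E s t = {x. (\<forall>i. x i \<in> E) \<and> (\<forall>i. t (x i) = s (x (i + 1)))}"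

definition label_shift ::
  "'e set \<Rightarrow> ('e \<Rightarrow> 'v) \<Rightarrow> ('e \<Rightarrow> 'v) \<Rightarrow> ('e \<Rightarrow> 'a) \<Rightarrow> (int \<Rightarrow> 'a) set" where
  "label_shift E s t L = (\<lambda>x. L \<circ> x) ` edge_shift E s t"

definition right_resolving :: "'e set \<Rightarrow> ('e \<Rightarrow> 'v) \<Rightarrow> ('e \<Rightarrow> 'a) \<Rightarrow> bool" where
  "right_resolving E s L \<longleftrightarrow>
     (\<forall>e1\<in>E. \<forall>e2\<in>E. e1 \<noteq> e2 \<and> s e1 = s e2 \<longrightarrow> L e1 \<noteq> L e2)"

definition right_paths_from :: "'e set \<Rightarrow> ('e \<Rightarrow> 'v) \<Rightarrow> ('e \<Rightarrow> 'v) \<Rightarrow> 'v \<Rightarrow> (nat \<Rightarrow> 'e) set" where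
  "right_paths_from E s t v = {x. (\<forall>n. x n \<in> E) \<and> (\<forall>n. t (x n) = s (x (Suc n))) \<and> s (x 0) = v}"

definition follower_vertex ::
  "'e set \<Rightarrow> ('e \<Rightarrow> 'v) \<Rightarrow> ('e \<Rightarrow> 'v) \<Rightarrow> ('e \<Rightarrow> 'a) \<Rightarrow> 'v \<Rightarrow> (nat \<Rightarrow> 'a) set" where
  "follower_vertex E s t L v = (\<lambda>x. L \<circ> x) ` right_paths_from E s t v"

definition right_part :: "(int \<Rightarrow> 'a) set \<Rightarrow> (nat \<Rightarrow> 'a) set" where
  "right_part Y = (\<lambda>y. \<lambda>n. y (int n)) ` Y"

definition glue :: "(int \<Rightarrow> 'a) \<Rightarrow> (nat \<Rightarrow> 'a) \<Rightarrow> (int \<Rightarrow> 'a)" where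
  "glue y w = (\<lambda>i. if i < 0 then y i else w (nat i))"

definition follower_point :: "(int \<Rightarrow> 'a) set \<Rightarrow> (int \<Rightarrow> 'a) \<Rightarrow> (nat \<Rightarrow> 'a) set" where
  "follower_point Y y = {w \<in> right_part Y. glue y w \<in> Y}"

definition regular_vertex ::
  "'e set \<Rightarrow> ('e \<Rightarrow> 'v) \<Rightarrow> ('e \<Rightarrow> 'v) \<Rightarrow> ('e \<Rightarrow> 'a) \<Rightarrow> 'v \<Rightarrow> bool" where
  "regular_vertex E s t L v \<longleftrightarrow>
     (\<exists>z\<in>edge_shift E s t. t (z (-1)) = v \<and>
        follower_vertex E s t L v = follower_point (label_shift E s t L) (L \<circ> z))"

definition regular_graph ::
  "'v set \<Rightarrow> 'e set \<Rightarrow> ('e \<Rightarrow> 'v) \<Rightarrow> ('e \<Rightarrow> 'v) \<Rightarrow> ('e \<Rightarrow> 'a) \<Rightarrow> bool" where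
  "regular_graph V E s t L \<longleftrightarrow> (\<forall>v\<in>V. regular_vertex E s t L v)"

definition follower_separated ::
  "'v set \<Rightarrow> 'e set \<Rightarrow> ('e \<Rightarrow> 'v) \<Rightarrow> ('e \<Rightarrow> 'v) \<Rightarrow> ('e \<Rightarrow> 'a) \<Rightarrow> bool" where
  "follower_separated V E s t L \<longleftrightarrow>
     (\<forall>v\<in>V. \<forall>w\<in>V. follower_vertex E s t L v = follower_vertex E s t L w \<longrightarrow> v = w)"

definition finite_path :: "'e set \<Rightarrow> ('e \<Rightarrow> 'v) \<Rightarrow> ('e \<Rightarrow> 'v) \<Rightarrow> 'e list \<Rightarrow> bool" where
  "finite_path E s t \<gamma> \<longleftrightarrow> \<gamma> \<noteq> [] \<and> set \<gamma> \<subseteq> E \<and>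
     (\<forall>i. Suc i < length \<gamma> \<longrightarrow> t (\<gamma> ! i) = s (\<gamma> ! Suc i))"

definition reach :: "'e set \<Rightarrow> ('e \<Rightarrow> 'v) \<Rightarrow> ('e \<Rightarrow> 'v) \<Rightarrow> 'v \<Rightarrow> 'v \<Rightarrow> bool" where
  "reach E s t u w \<longleftrightarrow> u = w \<or>
     (\<exists>\<gamma>. finite_path E s t \<gamma> \<and> s (hd \<gamma>) = u \<and> t (last \<gamma>) = w)"

definition recurrent :: "'v set \<Rightarrow> 'e set \<Rightarrow> ('e \<Rightarrow> 'v) \<Rightarrow> ('e \<Rightarrow> 'v) \<Rightarrow> 'v \<Rightarrow> bool" where
  "recurrent V E s t v \<longleftrightarrow> v \<in> V \<and>
     (\<exists>\<gamma>. finite_path E s t \<gamma> \<and> s (hd \<gamma>) = v \<and> t (last \<gamma>) = v)"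

definition component :: "'v set \<Rightarrow> 'e set \<Rightarrow> ('e \<Rightarrow> 'v) \<Rightarrow> ('e \<Rightarrow> 'v) \<Rightarrow> 'v set \<Rightarrow> bool" where
  "component V E s t C \<longleftrightarrow> (\<exists>v. recurrent V E s t v \<and>
     C = {w. recurrent V E s t w \<and> reach E s t v w \<and> reach E s t w v})"

definition terminal_component :: "'v set \<Rightarrow> 'e set \<Rightarrow> ('e \<Rightarrow> 'v) \<Rightarrow> ('e \<Rightarrow> 'v) \<Rightarrow> 'v set \<Rightarrow> bool" where
  "terminal_component V E s t C \<longleftrightarrow> component V E s t C \<and>
     (\<forall>D. component V E s t D \<and> D \<noteq> C \<longrightarrow> \<not> (\<exists>u\<in>C. \<exists>w\<in>D. reach E s t u w))"

definition is_word :: "(int \<Rightarrow> 'a) set \<Rightarrow> 'a list \<Rightarrow> bool" where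
  "is_word Y w \<longleftrightarrow> (\<exists>y\<in>Y. \<exists>i::int. w = map (\<lambda>k. y (i + int k)) [0..<length w])"

definition synchronizing :: "(int \<Rightarrow> 'a) set \<Rightarrow> 'a list \<Rightarrow> bool" where
  "synchronizing Y w \<longleftrightarrow> is_word Y w \<and>
     (\<forall>u v. is_word Y (u @ w) \<and> is_word Y (w @ v) \<longrightarrow> is_word Y (u @ w @ v))"

end

theory Submission
  imports Defs "HOL-Library.Omega_Words_Fun"
begin

text \<open>
  For a word w let targets(w) be the set of end vertices of the paths labelled w. If every
  path labelled L \<gamma> ends at the end vertex v of \<gamma>, i.e. targets(L \<gamma>) = {v}, then L \<gamma> is
  synchronizing: two occurrences of it can be glued at v, and as H has neither sinks nor
  sources, every finite path extends to a point of the edge shift.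

  Regularity of v provides a point z entering v whose
  past determines the follower set f(v). The targets of the blocks of z just before v
  decrease with the block length and eventually stabilise; by Koenig's lemma each stable
  target u ends a left-infinite path labelled like the past of z, hence f(u) \<subseteq> f(v). So a
  long block is a path ending at v whose end vertex dominates all targets of its label.
  Right-resolvingness preserves this domination under extensions, and while another target
  u survives, follower separation makes f(u) a proper subset of the follower set of the end
  vertex, so appending a word readable from the end vertex but not from u removes u.
  Finally the single remaining target c is reachable from v; as C is terminal, c leads back
  to v, and appending a path from c to v keeps the target set a singleton.
\<close>

section \<open>Finite and right-infinite paths\<close>

lemma all_nat_split: "(\<forall>n. P n) \<longleftrightarrow> P 0 \<and> (\<forall>n. P (Suc n))"
  by (metis not0_implies_Suc)

lemma finite_path_Cons:
  "finite_path E s t (e # \<gamma>) \<longleftrightarrow> e \<in> E \<and> (\<gamma> = [] \<or> finite_path E s t \<gamma> \<and> t e = s (hd \<gamma>))"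
proof (cases \<gamma>)
  case (Cons a \<gamma>')
  have "(\<forall>i. Suc i < length (e # \<gamma>) \<longrightarrow> t ((e # \<gamma>) ! i) = s ((e # \<gamma>) ! Suc i)) \<longleftrightarrow>
      t e = s a \<and> (\<forall>i. Suc i < length \<gamma> \<longrightarrow> t (\<gamma> ! i) = s (\<gamma> ! Suc i))"
    using Cons by (subst all_nat_split) simp
  then show ?thesis using Cons by (auto simp: finite_path_def)
qed (simp add: finite_path_def)

lemma finite_path_append:
  assumes "\<gamma> \<noteq> []" "\<delta> \<noteq> []"
  shows "finite_path E s t (\<gamma> @ \<delta>) \<longleftrightarrow>
    finite_path E s t \<gamma> \<and> finite_path E s t \<delta> \<and> t (last \<gamma>) = s (hd \<delta>)"
  using assms(1)
proof (induction \<gamma> rule: list_nonempty_induct)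
  case (single e)
  show ?case using assms(2) by (simp add: finite_path_Cons)
next
  case (cons e \<gamma>)
  then show ?case using assms(2) by (auto simp: finite_path_Cons)
qed

lemma finite_path_appendI:
  assumes "finite_path E s t \<gamma>" "finite_path E s t \<delta>" "t (last \<gamma>) = s (hd \<delta>)"
  shows "finite_path E s t (\<gamma> @ \<delta>)"
proof -
  have "\<gamma> \<noteq> []" "\<delta> \<noteq> []" using assms(1,2) by (simp_all add: finite_path_def)
  then show ?thesis using assms finite_path_append by blast
qed

lemma finite_path_rev: "finite_path E t s (rev \<gamma>) \<longleftrightarrow> finite_path E s t \<gamma>"
proof (induction \<gamma>)
  case (Cons e \<gamma>)
  show ?case
    by (cases "\<gamma> = []") (use Cons in \<open>auto simp: finite_path_Cons finite_path_append last_rev\<close>)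
qed (simp add: finite_path_def)

lemma finite_path_unique:
  assumes "right_resolving E s L"
  shows "finite_path E s t \<gamma> \<Longrightarrow> finite_path E s t \<delta> \<Longrightarrow> s (hd \<gamma>) = s (hd \<delta>) \<Longrightarrow>
    map L \<gamma> = map L \<delta> \<Longrightarrow> \<gamma> = \<delta>"
proof (induction \<gamma> arbitrary: \<delta>)
  case (Cons e \<gamma>)
  then obtain e' \<delta>' where \<delta>: "\<delta> = e' # \<delta>'" "L e = L e'" "map L \<gamma> = map L \<delta>'"
    by (cases \<delta>) auto
  have "e = e'"
    using assms Cons.prems \<delta> unfolding right_resolving_def by (auto simp: finite_path_Cons)
  then show ?case
    using Cons \<delta> by (cases "\<gamma> = []") (auto simp: finite_path_Cons)
qed (simp add: finite_path_def)

lemma finite_path_split: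
  assumes "finite_path E s t \<gamma>" "map L \<gamma> = U @ W" "U \<noteq> []" "W \<noteq> []"
  obtains \<gamma>\<^sub>1 \<gamma>\<^sub>2 where "\<gamma> = \<gamma>\<^sub>1 @ \<gamma>\<^sub>2" "map L \<gamma>\<^sub>1 = U" "map L \<gamma>\<^sub>2 = W"
    "finite_path E s t \<gamma>\<^sub>1" "finite_path E s t \<gamma>\<^sub>2" "t (last \<gamma>\<^sub>1) = s (hd \<gamma>\<^sub>2)"
proof
  let ?n = "length U"
  show "\<gamma> = take ?n \<gamma> @ drop ?n \<gamma>" by simp
  show "map L (take ?n \<gamma>) = U" "map L (drop ?n \<gamma>) = W"
    using assms(2) by (simp_all flip: take_map drop_map)
  then have "take ?n \<gamma> \<noteq> []" "drop ?n \<gamma> \<noteq> []" using assms(3,4) by auto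
  then show "finite_path E s t (take ?n \<gamma>)" "finite_path E s t (drop ?n \<gamma>)"
    "t (last (take ?n \<gamma>)) = s (hd (drop ?n \<gamma>))"
    using assms(1) finite_path_append[of "take ?n \<gamma>" "drop ?n \<gamma>", unfolded append_take_drop_id]
    by blast+
qed

lemma right_paths_from_build:
  "e ## p \<in> right_paths_from E s t u \<longleftrightarrow>
    e \<in> E \<and> s e = u \<and> p \<in> right_paths_from E s t (t e)"
  unfolding right_paths_from_def by (subst (1 2) all_nat_split) auto

lemma right_paths_from_conc:
  assumes "finite_path E s t \<gamma>" "p \<in> right_paths_from E s t (t (last \<gamma>))"
  shows "\<gamma> \<frown> p \<in> right_paths_from E s t (s (hd \<gamma>))"
  using assms
proof (induction \<gamma>)
  case (Cons e \<gamma>)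
  then show ?case
    by (cases "\<gamma> = []") (auto simp: finite_path_Cons right_paths_from_build)
qed (simp add: finite_path_def)

lemma right_paths_from_suffix:
  "p \<in> right_paths_from E s t u \<Longrightarrow> suffix k p \<in> right_paths_from E s t (s (p k))"
  by (simp add: right_paths_from_def)

lemma finite_path_prefix:
  assumes "p \<in> right_paths_from E s t u" "0 < n"
  shows "finite_path E s t (prefix n p)" "s (hd (prefix n p)) = u"
    "t (last (prefix n p)) = s (p n)"
  using assms by (auto simp: right_paths_from_def finite_path_def subsequence_def hd_map last_map)

lemma finite_path_segment:
  assumes "p \<in> right_paths_from E s t u" "a < b"
  shows "finite_path E s t (p [a \<rightarrow> b])" "s (hd (p [a \<rightarrow> b])) = s (p a)"
    "t (last (p [a \<rightarrow> b])) = s (p b)"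
proof -
  have "suffix a p \<in> right_paths_from E s t (s (p a))" "0 < b - a"
    using right_paths_from_suffix[OF assms(1)] assms(2) by simp_all
  from finite_path_prefix[OF this] assms(2)
  show "finite_path E s t (p [a \<rightarrow> b])" "s (hd (p [a \<rightarrow> b])) = s (p a)"
    "t (last (p [a \<rightarrow> b])) = s (p b)"
    by (simp_all add: subsequence_prefix_suffix)
qed

lemma labeled_graph_reverse: "labeled_graph V E t s L \<longleftrightarrow> labeled_graph V E s t L"
  unfolding labeled_graph_def by blast

lemma right_paths_from_nonempty:
  assumes "labeled_graph V E s t L" "u \<in> V"
  obtains p where "p \<in> right_paths_from E s t u"
proof -
  define out where "out w = (SOME e. e \<in> E \<and> s e = w)" for w
  have out: "out w \<in> E \<and> s (out w) = w" if "w \<in> V" for w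
    using someI_ex[of "\<lambda>e. e \<in> E \<and> s e = w"] that assms(1)
    unfolding out_def labeled_graph_def by blast
  have tV: "t e \<in> V" if "e \<in> E" for e
    using assms(1) that unfolding labeled_graph_def by blast
  define p where "p = rec_nat (out u) (\<lambda>_ e. out (t e))"
  have pE: "p n \<in> E" for n
    by (induction n) (simp_all add: p_def out assms(2) tV)
  have "p \<in> right_paths_from E s t u"
    unfolding right_paths_from_def using pE by (simp add: p_def out assms(2) tV)
  then show thesis by (rule that)
qed

text \<open>A left-infinite path ending at u is encoded as a right-infinite path l from u in the
  reversed graph (s and t swapped), read backwards: l 0 is the edge at position -1.\<close>

definition two_sided :: "(nat \<Rightarrow> 'e) \<Rightarrow> (nat \<Rightarrow> 'e) \<Rightarrow> int \<Rightarrow> 'e" where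
  "two_sided l r k = (if k < 0 then l (nat (- k - 1)) else r (nat k))"

lemma two_sided_in_edge_shift:
  assumes "l \<in> right_paths_from E t s u" "r \<in> right_paths_from E s t u"
  shows "two_sided l r \<in> edge_shift E s t"
  unfolding edge_shift_def
proof (intro CollectI conjI allI)
  fix k :: int
  show "two_sided l r k \<in> E"
    using assms unfolding two_sided_def right_paths_from_def by simp
  consider "k < -1" | "k = -1" | "0 \<le> k" by linarith
  then show "t (two_sided l r k) = s (two_sided l r (k + 1))"
  proof cases
    case 1
    then have "nat (- k - 1) = Suc (nat (- (k + 1) - 1))" by simp
    then show ?thesis using 1 assms(1) unfolding two_sided_def right_paths_from_def by simp
  next
    case 2
    then show ?thesis using assms unfolding two_sided_def right_paths_from_def by simp
  next
    case 3
    then have "nat (k + 1) = Suc (nat k)" by simp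
    then show ?thesis using 3 assms(2) unfolding two_sided_def right_paths_from_def by simp
  qed
qed

lemma left_path_of_edge_shift:
  assumes "z \<in> edge_shift E s t"
  shows "(\<lambda>j. z (- int j - 1)) \<in> right_paths_from E t s (t (z (-1)))"
proof -
  have step: "t (z i) = s (z (i + 1))" for i
    using assms unfolding edge_shift_def by blast
  have "t (z (- int (Suc j) - 1)) = s (z (- int j - 1))" for j
  proof -
    have "- int (Suc j) - 1 + 1 = - int j - 1" by simp
    then show ?thesis using step[of "- int (Suc j) - 1"] by (simp only:)
  qed
  then show ?thesis using assms unfolding edge_shift_def right_paths_from_def by simp
qed

section \<open>Koenig's lemma\<close>

lemma koenig:
  fixes P :: "'a list \<Rightarrow> bool"
  assumes "finite A"
    and P_set: "\<And>xs. P xs \<Longrightarrow> set xs \<subseteq> A"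
    and P_prefix: "\<And>xs ys. P (xs @ ys) \<Longrightarrow> P xs"
    and P_length: "\<And>n. \<exists>xs. P xs \<and> length xs = n"
  shows "\<exists>f. \<forall>n. P (prefix n f)"
proof -
  define extendable where "extendable xs \<longleftrightarrow> (\<forall>n. \<exists>ys. P (xs @ ys) \<and> n \<le> length ys)" for xs
  have step: "\<exists>a. extendable (xs @ [a])" if ext: "extendable xs" for xs
  proof -
    have "\<forall>n\<in>UNIV. \<exists>a\<in>A. \<exists>ys. P (xs @ a # ys) \<and> n \<le> length ys"
    proof
      fix n
      obtain ys where ys: "P (xs @ ys)" "Suc n \<le> length ys"
        using ext unfolding extendable_def by blast
      then obtain a ys' where "ys = a # ys'" by (cases ys) auto
      then show "\<exists>a\<in>A. \<exists>ys. P (xs @ a # ys) \<and> n \<le> length ys"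
        using ys P_set[OF ys(1)] by auto
    qed
    from pigeonhole_infinite_rel[OF infinite_UNIV_nat \<open>finite A\<close> this]
    obtain a where "infinite {n. \<exists>ys. P (xs @ a # ys) \<and> n \<le> length ys}"
      by auto
    then have "extendable (xs @ [a])"
      unfolding extendable_def infinite_nat_iff_unbounded_le by (force intro: order_trans)
    then show ?thesis ..
  qed
  define seq where "seq = rec_nat [] (\<lambda>_ xs. xs @ [SOME a. extendable (xs @ [a])])"
  have seq_extendable: "extendable (seq n)" for n
  proof (induction n)
    case 0
    have "seq 0 = []" by (simp add: seq_def)
    then show ?case using P_length unfolding extendable_def by (metis append_Nil order_refl)
  next
    case (Suc n)
    then show ?case using someI_ex[OF step] by (simp add: seq_def)
  qed
  define f where "f n = last (seq (Suc n))" for n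
  have "seq n = prefix n f" for n
    by (induction n) (simp_all add: seq_def f_def)
  moreover have "P (seq n)" for n
    using seq_extendable[of n] P_prefix unfolding extendable_def by blast
  ultimately show ?thesis by auto
qed

lemma right_path_of_finite_prefixes:
  assumes "finite E"
    and "\<And>n. \<exists>\<gamma>. finite_path E s t \<gamma> \<and> s (hd \<gamma>) = u \<and> map L \<gamma> = prefix (Suc n) w"
  shows "\<exists>p\<in>right_paths_from E s t u. L \<circ> p = w"
proof -
  define P where "P \<gamma> \<longleftrightarrow> \<gamma> = [] \<or>
    finite_path E s t \<gamma> \<and> s (hd \<gamma>) = u \<and> map L \<gamma> = prefix (length \<gamma>) w" for \<gamma>
  have "\<exists>p. \<forall>n. P (prefix n p)"
  proof (rule koenig[OF assms(1)])
    show "set \<gamma> \<subseteq> E" if "P \<gamma>" for \<gamma>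
      using that unfolding P_def finite_path_def by auto
    show "P \<gamma>" if "P (\<gamma> @ \<delta>)" for \<gamma> \<delta>
    proof (cases "\<gamma> = [] \<or> \<delta> = []")
      case False
      have "map L \<gamma> = take (length \<gamma>) (map L (\<gamma> @ \<delta>))" by simp
      also have "\<dots> = take (length \<gamma>) (prefix (length (\<gamma> @ \<delta>)) w)"
        using that False unfolding P_def by (metis append_is_Nil_conv)
      also have "\<dots> = prefix (length \<gamma>) w" by simp
      finally show ?thesis
        using that False finite_path_append[of \<gamma> \<delta>] unfolding P_def by auto
    qed (use that in \<open>auto simp: P_def\<close>)
    show "\<exists>\<gamma>. P \<gamma> \<and> length \<gamma> = n" for n
    proof (cases n)
      case (Suc m)
      then show ?thesis
        using assms(2)[of m] unfolding P_def by (metis length_map subsequence_length diff_zero)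
    qed (simp add: P_def)
  qed
  then obtain p where p: "P (prefix (Suc (Suc n)) p)" for n by blast
  have "p n \<in> E \<and> t (p n) = s (p (Suc n)) \<and> L (p n) = w n \<and> s (p 0) = u" for n
    using p[of n] unfolding P_def finite_path_def subsequence_def
    by (auto simp del: upt_Suc simp: hd_map)
  then have "p \<in> right_paths_from E s t u" "L \<circ> p = w"
    unfolding right_paths_from_def by auto
  then show ?thesis by blast
qed

section \<open>Words of the label shift and their targets\<close>

text \<open>Here the absence of sinks and sources enters: every finite path extends to a point
  of the edge shift.\<close>

lemma is_word_finite_path:
  assumes "labeled_graph V E s t L" "finite_path E s t \<gamma>"
  shows "is_word (label_shift E s t L) (map L \<gamma>)"
proof -
  have "hd \<gamma> \<in> E" "last \<gamma> \<in> E"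
    using assms(2) unfolding finite_path_def by auto
  then have "s (hd \<gamma>) \<in> V" "t (last \<gamma>) \<in> V"
    using assms(1) unfolding labeled_graph_def by auto
  then obtain l r where "l \<in> right_paths_from E t s (s (hd \<gamma>))"
    and "r \<in> right_paths_from E s t (t (last \<gamma>))"
    using right_paths_from_nonempty assms(1) labeled_graph_reverse by metis
  then have x: "two_sided l (\<gamma> \<frown> r) \<in> edge_shift E s t"
    using two_sided_in_edge_shift right_paths_from_conc assms(2) by metis
  have "map L \<gamma> = map (\<lambda>k. (L \<circ> two_sided l (\<gamma> \<frown> r)) (0 + int k)) [0..<length (map L \<gamma>)]"
    by (rule nth_equalityI) (simp_all add: two_sided_def)
  then show ?thesis
    using x unfolding is_word_def label_shift_def by blast
qed

lemma is_word_finite_pathE: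
  assumes "is_word (label_shift E s t L) w" "w \<noteq> []"
  obtains \<gamma> where "finite_path E s t \<gamma>" "map L \<gamma> = w"
proof -
  obtain x i where x: "x \<in> edge_shift E s t" and w: "w = map (\<lambda>k. L (x (i + int k))) [0..<length w]"
    using assms(1) unfolding is_word_def label_shift_def by auto
  have "finite_path E s t (map (\<lambda>k. x (i + int k)) [0..<length w])"
    using x assms(2) unfolding edge_shift_def finite_path_def by (auto simp: ac_simps)
  moreover have "map L (map (\<lambda>k. x (i + int k)) [0..<length w]) = w"
    by (subst (2) w) simp
  ultimately show thesis by (rule that)
qed

definition targets :: "'e set \<Rightarrow> ('e \<Rightarrow> 'v) \<Rightarrow> ('e \<Rightarrow> 'v) \<Rightarrow> ('e \<Rightarrow> 'a) \<Rightarrow> 'a list \<Rightarrow> 'v set" where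
  "targets E s t L w = {t (last \<gamma>) | \<gamma>. finite_path E s t \<gamma> \<and> map L \<gamma> = w}"

definition targets_from ::
  "'e set \<Rightarrow> ('e \<Rightarrow> 'v) \<Rightarrow> ('e \<Rightarrow> 'v) \<Rightarrow> ('e \<Rightarrow> 'a) \<Rightarrow> 'v \<Rightarrow> 'a list \<Rightarrow> 'v set" where
  "targets_from E s t L u w =
    {t (last \<gamma>) | \<gamma>. finite_path E s t \<gamma> \<and> s (hd \<gamma>) = u \<and> map L \<gamma> = w}"

lemma targets_subset_vertices:
  assumes "labeled_graph V E s t L"
  shows "targets E s t L w \<subseteq> V"
proof
  fix v assume "v \<in> targets E s t L w"
  then obtain \<gamma> where "finite_path E s t \<gamma>" "v = t (last \<gamma>)"
    unfolding targets_def by blast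
  moreover from this have "last \<gamma> \<in> E"
    unfolding finite_path_def using last_in_set by blast
  ultimately show "v \<in> V"
    using assms unfolding labeled_graph_def by auto
qed

lemma finite_targets:
  assumes "labeled_graph V E s t L"
  shows "finite (targets E s t L w)"
  using finite_subset[OF targets_subset_vertices[OF assms]] assms
  unfolding labeled_graph_def by blast

lemma targets_append:
  assumes "w \<noteq> []" "w' \<noteq> []"
  shows "targets E s t L (w @ w') = (\<Union>u\<in>targets E s t L w. targets_from E s t L u w')"
proof (intro equalityI subsetI)
  fix v assume "v \<in> targets E s t L (w @ w')"
  then obtain \<gamma> where \<gamma>: "finite_path E s t \<gamma>" "map L \<gamma> = w @ w'" "v = t (last \<gamma>)"
    unfolding targets_def by blast
  obtain \<gamma>\<^sub>1 \<gamma>\<^sub>2 where \<gamma>\<^sub>1\<^sub>2: "\<gamma> = \<gamma>\<^sub>1 @ \<gamma>\<^sub>2" "map L \<gamma>\<^sub>1 = w" "map L \<gamma>\<^sub>2 = w'"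
    "finite_path E s t \<gamma>\<^sub>1" "finite_path E s t \<gamma>\<^sub>2" "t (last \<gamma>\<^sub>1) = s (hd \<gamma>\<^sub>2)"
    using finite_path_split[OF \<gamma>(1,2) assms] .
  then have "t (last \<gamma>\<^sub>1) \<in> targets E s t L w"
    unfolding targets_def by blast
  moreover have "v \<in> targets_from E s t L (t (last \<gamma>\<^sub>1)) w'"
    using \<gamma>\<^sub>1\<^sub>2 \<gamma>(3) assms(2) unfolding targets_from_def by auto
  ultimately show "v \<in> (\<Union>u\<in>targets E s t L w. targets_from E s t L u w')" by blast
next
  fix v assume "v \<in> (\<Union>u\<in>targets E s t L w. targets_from E s t L u w')"
  then obtain \<gamma>\<^sub>1 \<gamma>\<^sub>2 where \<gamma>\<^sub>1\<^sub>2: "finite_path E s t \<gamma>\<^sub>1" "map L \<gamma>\<^sub>1 = w"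
    "finite_path E s t \<gamma>\<^sub>2" "t (last \<gamma>\<^sub>1) = s (hd \<gamma>\<^sub>2)" "map L \<gamma>\<^sub>2 = w'" "v = t (last \<gamma>\<^sub>2)"
    unfolding targets_def targets_from_def by auto
  have "finite_path E s t (\<gamma>\<^sub>1 @ \<gamma>\<^sub>2)"
    using \<gamma>\<^sub>1\<^sub>2(1,3,4) by (rule finite_path_appendI)
  moreover have "map L (\<gamma>\<^sub>1 @ \<gamma>\<^sub>2) = w @ w'" using \<gamma>\<^sub>1\<^sub>2(2,5) by simp
  moreover have "v = t (last (\<gamma>\<^sub>1 @ \<gamma>\<^sub>2))" using \<gamma>\<^sub>1\<^sub>2(3,6) by (simp add: finite_path_def)
  ultimately show "v \<in> targets E s t L (w @ w')"
    unfolding targets_def by blast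
qed

lemma targets_append_subset:
  assumes "w' \<noteq> []"
  shows "targets E s t L (w @ w') \<subseteq> targets E s t L w'"
proof (cases "w = []")
  case False
  have "targets E s t L (w @ w') = (\<Union>u\<in>targets E s t L w. targets_from E s t L u w')"
    by (rule targets_append[OF False assms])
  also have "\<dots> \<subseteq> targets E s t L w'"
    unfolding targets_def targets_from_def by blast
  finally show ?thesis .
qed simp

lemma targets_from_unique:
  assumes "right_resolving E s L"
    and "v \<in> targets_from E s t L u w" "v' \<in> targets_from E s t L u w"
  shows "v = v'"
proof -
  obtain \<gamma> \<gamma>' where \<gamma>: "finite_path E s t \<gamma>" "finite_path E s t \<gamma>'" "s (hd \<gamma>) = s (hd \<gamma>')"
    "map L \<gamma> = map L \<gamma>'" "v = t (last \<gamma>)" "v' = t (last \<gamma>')"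
    using assms(2,3) unfolding targets_from_def by auto
  then have "\<gamma> = \<gamma>'" using finite_path_unique[OF assms(1)] by blast
  then show ?thesis using \<gamma>(5,6) by simp
qed

lemma card_targets_from_le_1:
  assumes "right_resolving E s L"
  shows "card (targets_from E s t L u w) \<le> 1"
  using targets_from_unique[OF assms]
  by (cases "finite (targets_from E s t L u w)") (auto simp: card_le_Suc0_iff_eq)

lemma single_target_append:
  assumes "right_resolving E s L" "finite_path E s t (\<gamma> @ \<delta>)" "\<gamma> \<noteq> []"
    and "targets E s t L (map L \<gamma>) = {t (last \<gamma>)}"
  shows "targets E s t L (map L (\<gamma> @ \<delta>)) = {t (last (\<gamma> @ \<delta>))}"
proof (cases "\<delta> = []")
  case False
  have "finite_path E s t \<delta>" "t (last \<gamma>) = s (hd \<delta>)"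
    using finite_path_append[OF assms(3) False] assms(2) by blast+
  then have "t (last \<delta>) \<in> targets_from E s t L (t (last \<gamma>)) (map L \<delta>)"
    unfolding targets_from_def by force
  then have "targets_from E s t L (t (last \<gamma>)) (map L \<delta>) = {t (last \<delta>)}"
    using targets_from_unique[OF assms(1)] by blast
  moreover have "map L \<gamma> \<noteq> []" "map L \<delta> \<noteq> []" using assms(3) False by simp_all
  ultimately show ?thesis
    using targets_append[of "map L \<gamma>" "map L \<delta>" E s t L] assms(4) False by simp
qed (use assms in simp)

lemma synchronizing_if_single_target:
  assumes "labeled_graph V E s t L" "finite_path E s t \<gamma>"
    and "targets E s t L (map L \<gamma>) = {t (last \<gamma>)}"
  shows "synchronizing (label_shift E s t L) (map L \<gamma>)"
  unfolding synchronizing_def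
proof (intro conjI allI impI)
  let ?Y = "label_shift E s t L" and ?w = "map L \<gamma>"
  show "is_word ?Y ?w" using is_word_finite_path assms(1,2) .
  fix u v assume uv: "is_word ?Y (u @ ?w) \<and> is_word ?Y (?w @ v)"
  have "?w \<noteq> []" using assms(2) unfolding finite_path_def by simp
  show "is_word ?Y (u @ ?w @ v)"
  proof (cases "u = [] \<or> v = []")
    case False
    then have "u \<noteq> []" "v \<noteq> []" by auto
    obtain \<alpha> where \<alpha>: "finite_path E s t \<alpha>" "map L \<alpha> = u @ ?w"
      using is_word_finite_pathE[OF conjunct1[OF uv]] \<open>u \<noteq> []\<close> by auto
    obtain \<alpha>\<^sub>1 \<alpha>\<^sub>2 where \<alpha>\<^sub>1\<^sub>2: "\<alpha> = \<alpha>\<^sub>1 @ \<alpha>\<^sub>2" "map L \<alpha>\<^sub>1 = u" "map L \<alpha>\<^sub>2 = ?w"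
      "finite_path E s t \<alpha>\<^sub>1" "finite_path E s t \<alpha>\<^sub>2" "t (last \<alpha>\<^sub>1) = s (hd \<alpha>\<^sub>2)"
      by (rule finite_path_split[OF \<alpha> \<open>u \<noteq> []\<close> \<open>?w \<noteq> []\<close>])
    obtain \<beta> where \<beta>: "finite_path E s t \<beta>" "map L \<beta> = ?w @ v"
      using is_word_finite_pathE[OF conjunct2[OF uv]] \<open>?w \<noteq> []\<close> by auto
    obtain \<beta>\<^sub>1 \<beta>\<^sub>2 where \<beta>\<^sub>1\<^sub>2: "\<beta> = \<beta>\<^sub>1 @ \<beta>\<^sub>2" "map L \<beta>\<^sub>1 = ?w" "map L \<beta>\<^sub>2 = v"
      "finite_path E s t \<beta>\<^sub>1" "finite_path E s t \<beta>\<^sub>2" "t (last \<beta>\<^sub>1) = s (hd \<beta>\<^sub>2)"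
      by (rule finite_path_split[OF \<beta> \<open>?w \<noteq> []\<close> \<open>v \<noteq> []\<close>])
    have "t (last \<alpha>\<^sub>2) \<in> targets E s t L ?w" "t (last \<beta>\<^sub>1) \<in> targets E s t L ?w"
      using \<alpha>\<^sub>1\<^sub>2(3,5) \<beta>\<^sub>1\<^sub>2(2,4) unfolding targets_def by blast+
    moreover have "\<alpha>\<^sub>2 \<noteq> []" "\<beta>\<^sub>2 \<noteq> []"
      using \<alpha>\<^sub>1\<^sub>2(5) \<beta>\<^sub>1\<^sub>2(5) unfolding finite_path_def by auto
    ultimately have "t (last \<alpha>) = s (hd \<beta>\<^sub>2)"
      using assms(3) \<alpha>\<^sub>1\<^sub>2(1) \<beta>\<^sub>1\<^sub>2(6) by simp
    then have "finite_path E s t (\<alpha> @ \<beta>\<^sub>2)"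
      by (rule finite_path_appendI[OF \<alpha>(1) \<beta>\<^sub>1\<^sub>2(5)])
    then have "is_word ?Y (map L (\<alpha> @ \<beta>\<^sub>2))" by (rule is_word_finite_path[OF assms(1)])
    then show ?thesis using \<alpha>(2) \<beta>\<^sub>1\<^sub>2(3) by simp
  next
    case True
    then show ?thesis using uv by (elim disjE) simp_all
  qed
qed

section \<open>Follower sets\<close>

lemma follower_vertex_mono_along_paths:
  assumes "right_resolving E s L" "finite_path E s t \<gamma>" "finite_path E s t \<delta>"
    and "map L \<gamma> = map L \<delta>"
    and "follower_vertex E s t L (s (hd \<gamma>)) \<subseteq> follower_vertex E s t L (s (hd \<delta>))"
  shows "follower_vertex E s t L (t (last \<gamma>)) \<subseteq> follower_vertex E s t L (t (last \<delta>))"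
proof
  fix y assume "y \<in> follower_vertex E s t L (t (last \<gamma>))"
  then obtain p where p: "p \<in> right_paths_from E s t (t (last \<gamma>))" "y = L \<circ> p"
    unfolding follower_vertex_def by blast
  have "L \<circ> (\<gamma> \<frown> p) \<in> follower_vertex E s t L (s (hd \<delta>))"
    using right_paths_from_conc[OF assms(2) p(1)] assms(5) unfolding follower_vertex_def by blast
  then obtain q where q: "q \<in> right_paths_from E s t (s (hd \<delta>))" "L \<circ> q = map L \<gamma> \<frown> y"
    unfolding follower_vertex_def p(2) by auto
  let ?n = "length \<gamma>"
  have n: "0 < ?n" using assms(2) unfolding finite_path_def by simp
  have "map L (prefix ?n q) = prefix ?n (L \<circ> q)" by (simp add: subsequence_def)
  also have "\<dots> = map L \<gamma>" using q(2) prefix_conc_length[of "map L \<gamma>" y] by simp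
  finally have "prefix ?n q = \<delta>"
    using finite_path_unique[OF assms(1) finite_path_prefix(1)[OF q(1) n] assms(3)]
      finite_path_prefix(2)[OF q(1) n] assms(4) by simp
  then have "suffix ?n q \<in> right_paths_from E s t (t (last \<delta>))"
    using right_paths_from_suffix[OF q(1), of ?n] finite_path_prefix(3)[OF q(1) n] by simp
  moreover have "L \<circ> suffix ?n q = y"
  proof -
    have "L \<circ> suffix ?n q = suffix ?n (L \<circ> q)" by (simp add: suffix_def comp_def)
    then show ?thesis using q(2) suffix_conc_length[of "map L \<gamma>" y] by simp
  qed
  ultimately show "y \<in> follower_vertex E s t L (t (last \<delta>))"
    unfolding follower_vertex_def by blast
qed

lemma path_label_unreadable_from:
  assumes "finite E" "\<not> follower_vertex E s t L c \<subseteq> follower_vertex E s t L u"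
  obtains \<rho> where "finite_path E s t \<rho>" "s (hd \<rho>) = c" "targets_from E s t L u (map L \<rho>) = {}"
proof -
  obtain p where p: "p \<in> right_paths_from E s t c" "L \<circ> p \<notin> follower_vertex E s t L u"
    using assms(2) unfolding follower_vertex_def by blast
  have "\<not> (\<forall>n. \<exists>\<gamma>. finite_path E s t \<gamma> \<and> s (hd \<gamma>) = u \<and> map L \<gamma> = prefix (Suc n) (L \<circ> p))"
  proof
    assume "\<forall>n. \<exists>\<gamma>. finite_path E s t \<gamma> \<and> s (hd \<gamma>) = u \<and> map L \<gamma> = prefix (Suc n) (L \<circ> p)"
    then obtain q where "q \<in> right_paths_from E s t u" "L \<circ> q = L \<circ> p"
      using right_path_of_finite_prefixes[OF assms(1)] by metis
    then show False using p(2) unfolding follower_vertex_def by (metis image_eqI)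
  qed
  then obtain n where n: "\<nexists>\<gamma>. finite_path E s t \<gamma> \<and> s (hd \<gamma>) = u \<and> map L \<gamma> = prefix (Suc n) (L \<circ> p)"
    by blast
  have "finite_path E s t (prefix (Suc n) p)" "s (hd (prefix (Suc n) p)) = c"
    using finite_path_prefix(1,2)[OF p(1) zero_less_Suc] .
  moreover have "targets_from E s t L u (map L (prefix (Suc n) p)) = {}"
    using n unfolding targets_from_def by (simp add: subsequence_def)
  ultimately show thesis by (rule that)
qed

text \<open>The invariant of the construction: by follower separation, every target other than the
  end vertex has a strictly smaller follower set and can therefore be cut off by a word.\<close>

definition dominating_path :: "'e set \<Rightarrow> ('e \<Rightarrow> 'v) \<Rightarrow> ('e \<Rightarrow> 'v) \<Rightarrow> ('e \<Rightarrow> 'a) \<Rightarrow> 'e list \<Rightarrow> bool" where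
  "dominating_path E s t L \<gamma> \<longleftrightarrow> finite_path E s t \<gamma> \<and>
    (\<forall>u\<in>targets E s t L (map L \<gamma>).
       follower_vertex E s t L u \<subseteq> follower_vertex E s t L (t (last \<gamma>)))"

lemma dominating_path_append:
  assumes "right_resolving E s L" "dominating_path E s t L \<gamma>" "finite_path E s t (\<gamma> @ \<rho>)"
  shows "dominating_path E s t L (\<gamma> @ \<rho>)"
proof (cases "\<rho> = []")
  case False
  let ?F = "follower_vertex E s t L"
  have "\<gamma> \<noteq> []" using assms(2) unfolding dominating_path_def finite_path_def by simp
  then have \<rho>: "finite_path E s t \<rho>" "t (last \<gamma>) = s (hd \<rho>)"
    using finite_path_append[OF _ False] assms(3) by blast+
  have "?F w \<subseteq> ?F (t (last \<rho>))" if w: "w \<in> targets E s t L (map L (\<gamma> @ \<rho>))" for w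
  proof -
    have "w \<in> (\<Union>u\<in>targets E s t L (map L \<gamma>). targets_from E s t L u (map L \<rho>))"
      using w targets_append[of "map L \<gamma>" "map L \<rho>" E s t L] \<open>\<gamma> \<noteq> []\<close> False by simp
    then obtain \<delta> where "s (hd \<delta>) \<in> targets E s t L (map L \<gamma>)" "finite_path E s t \<delta>"
      "map L \<delta> = map L \<rho>" "w = t (last \<delta>)"
      unfolding targets_from_def by blast
    then show ?thesis
      using follower_vertex_mono_along_paths[OF assms(1) _ \<rho>(1)] assms(2) \<rho>(2)
      unfolding dominating_path_def by simp
  qed
  then show ?thesis using assms(3) False unfolding dominating_path_def by simp
qed (use assms(2) in simp)

lemma card_targets_append_less:
  assumes "labeled_graph V E s t L" "right_resolving E s L" "w \<noteq> []" "w' \<noteq> []"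
    and "u \<in> targets E s t L w" "targets_from E s t L u w' = {}"
  shows "card (targets E s t L (w @ w')) < card (targets E s t L w)"
proof -
  let ?T = "targets E s t L w" and ?c = "\<lambda>u'. card (targets_from E s t L u' w')"
  have fin: "finite ?T" using finite_targets[OF assms(1)] .
  have "card (targets E s t L (w @ w')) \<le> (\<Sum>u'\<in>?T. ?c u')"
    unfolding targets_append[OF assms(3,4)] using card_UN_le[OF fin] .
  also have "\<dots> = (\<Sum>u'\<in>?T - {u}. ?c u')"
    using sum.remove[OF fin assms(5), of ?c] assms(6) by simp
  also have "\<dots> \<le> card (?T - {u})"
    using sum_bounded_above[of "?T - {u}" ?c 1] card_targets_from_le_1[OF assms(2)] by simp
  also have "\<dots> < card ?T" using card_Diff1_less[OF fin assms(5)] .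
  finally show ?thesis .
qed

lemma dominating_path_fewer_targets:
  assumes "labeled_graph V E s t L" "right_resolving E s L" "follower_separated V E s t L"
    and "dominating_path E s t L \<gamma>" "targets E s t L (map L \<gamma>) \<noteq> {t (last \<gamma>)}"
  obtains \<rho> where "dominating_path E s t L (\<gamma> @ \<rho>)"
    "card (targets E s t L (map L (\<gamma> @ \<rho>))) < card (targets E s t L (map L \<gamma>))"
proof -
  let ?T = "targets E s t L (map L \<gamma>)" and ?c = "t (last \<gamma>)"
  let ?F = "follower_vertex E s t L"
  have \<gamma>: "finite_path E s t \<gamma>" using assms(4) unfolding dominating_path_def by blast
  then have "?c \<in> ?T" unfolding targets_def by blast
  then obtain u where u: "u \<in> ?T" "u \<noteq> ?c" using assms(5) by blast
  have "\<not> ?F ?c \<subseteq> ?F u"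
  proof
    assume "?F ?c \<subseteq> ?F u"
    then have "?F u = ?F ?c" using assms(4) u(1) unfolding dominating_path_def by blast
    moreover have "u \<in> V" "?c \<in> V"
      using targets_subset_vertices[OF assms(1)] u(1) \<open>?c \<in> ?T\<close> by blast+
    ultimately show False using assms(3) u(2) unfolding follower_separated_def by blast
  qed
  moreover have "finite E" using assms(1) unfolding labeled_graph_def by blast
  ultimately obtain \<rho> where \<rho>: "finite_path E s t \<rho>" "s (hd \<rho>) = ?c"
    "targets_from E s t L u (map L \<rho>) = {}"
    using path_label_unreadable_from by metis
  have "dominating_path E s t L (\<gamma> @ \<rho>)"
    using dominating_path_append[OF assms(2,4)] finite_path_appendI[OF \<gamma> \<rho>(1)] \<rho>(2) by simp
  moreover have "map L \<gamma> \<noteq> []" "map L \<rho> \<noteq> []" using \<gamma> \<rho>(1) unfolding finite_path_def by auto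
  then have "card (targets E s t L (map L (\<gamma> @ \<rho>))) < card ?T"
    using card_targets_append_less[OF assms(1,2) _ _ u(1) \<rho>(3)] by simp
  ultimately show thesis by (rule that)
qed

lemma dominating_path_extends_to_single_target:
  assumes "labeled_graph V E s t L" "right_resolving E s L" "follower_separated V E s t L"
  shows "dominating_path E s t L \<gamma> \<Longrightarrow>
    \<exists>\<rho>. finite_path E s t (\<gamma> @ \<rho>) \<and> targets E s t L (map L (\<gamma> @ \<rho>)) = {t (last (\<gamma> @ \<rho>))}"
proof (induction "card (targets E s t L (map L \<gamma>))" arbitrary: \<gamma> rule: less_induct)
  case less
  show ?case
  proof (cases "targets E s t L (map L \<gamma>) = {t (last \<gamma>)}")
    case True
    then show ?thesis using less.prems unfolding dominating_path_def by (auto intro: exI[of _ "[]"])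
  next
    case False
    obtain \<rho> where "dominating_path E s t L (\<gamma> @ \<rho>)"
      "card (targets E s t L (map L (\<gamma> @ \<rho>))) < card (targets E s t L (map L \<gamma>))"
      using dominating_path_fewer_targets[OF assms less.prems False] by blast
    then obtain \<rho>' where "finite_path E s t ((\<gamma> @ \<rho>) @ \<rho>')"
      "targets E s t L (map L ((\<gamma> @ \<rho>) @ \<rho>')) = {t (last ((\<gamma> @ \<rho>) @ \<rho>'))}"
      using less.hyps by blast
    then show ?thesis by (intro exI[of _ "\<rho> @ \<rho>'"]) simp
  qed
qed

lemma follower_vertex_subset_follower_point:
  assumes "finite E"
    and "\<And>n. u \<in> targets E s t L (rev (prefix (Suc n) (\<lambda>j. y (- int j - 1))))"
  shows "follower_vertex E s t L u \<subseteq> follower_point (label_shift E s t L) y"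
proof
  let ?l = "\<lambda>j. y (- int j - 1)"
  have prefixes: "\<exists>\<gamma>. finite_path E t s \<gamma> \<and> t (hd \<gamma>) = u \<and> map L \<gamma> = prefix (Suc n) ?l" for n
  proof -
    obtain \<delta> where "finite_path E s t \<delta>" "map L \<delta> = rev (prefix (Suc n) ?l)" "u = t (last \<delta>)"
      using assms(2)[of n] unfolding targets_def by blast
    moreover have "map L (rev \<delta>) = rev (map L \<delta>)" by (simp add: rev_map)
    ultimately have "finite_path E t s (rev \<delta>)" "t (hd (rev \<delta>)) = u"
      "map L (rev \<delta>) = prefix (Suc n) ?l"
      using finite_path_rev by (auto simp: hd_rev simp del: subseq_to_Suc)
    then show ?thesis by blast
  qed
  then obtain b where b: "b \<in> right_paths_from E t s u" "L \<circ> b = ?l"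
    using right_path_of_finite_prefixes[OF assms(1) prefixes] by blast
  fix w assume "w \<in> follower_vertex E s t L u"
  then obtain p where p: "p \<in> right_paths_from E s t u" "w = L \<circ> p"
    unfolding follower_vertex_def by blast
  let ?x = "two_sided b p"
  have x: "L \<circ> ?x \<in> label_shift E s t L"
    using two_sided_in_edge_shift[OF b(1) p(1)] unfolding label_shift_def by (rule imageI)
  have "L \<circ> ?x = glue y w"
  proof
    fix k :: int
    have "L (b (nat (- k - 1))) = y k" if "k < 0"
      using fun_cong[OF b(2), of "nat (- k - 1)"] that by simp
    then show "(L \<circ> ?x) k = glue y w k"
      unfolding two_sided_def glue_def p(2) by simp
  qed
  moreover have "w = (\<lambda>n. (L \<circ> ?x) (int n))"
    unfolding two_sided_def p(2) by auto
  then have "w \<in> right_part (label_shift E s t L)"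
    using x unfolding right_part_def by blast
  ultimately show "w \<in> follower_point (label_shift E s t L) y"
    using x unfolding follower_point_def by simp
qed

lemma antitone_finite_sets_stabilize:
  fixes T :: "nat \<Rightarrow> 'a set"
  assumes "\<And>m n. m \<le> n \<Longrightarrow> T n \<subseteq> T m" "finite (T 0)"
  obtains N where "\<And>n. T N \<subseteq> T n"
proof
  define N where "N = (ARG_MIN (\<lambda>n. card (T n)) n. True)"
  fix n
  show "T N \<subseteq> T n"
  proof (cases "n \<le> N")
    case False
    then have "T n \<subseteq> T N" "finite (T N)"
      using assms finite_subset[of "T N" "T 0"] by simp_all
    moreover have "card (T N) \<le> card (T n)"
      unfolding N_def by (rule arg_min_nat_le) simp
    ultimately have "T n = T N"
      using card_subset_eq card_mono by (metis le_antisym)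
    then show ?thesis by simp
  qed (use assms(1) in simp)
qed

lemma regular_vertex_dominating_path:
  assumes "labeled_graph V E s t L" "regular_vertex E s t L v"
  obtains \<gamma> where "dominating_path E s t L \<gamma>" "t (last \<gamma>) = v"
proof -
  obtain z where z: "z \<in> edge_shift E s t" "t (z (-1)) = v"
    "follower_vertex E s t L v = follower_point (label_shift E s t L) (L \<circ> z)"
    using assms(2) unfolding regular_vertex_def by blast
  let ?l = "\<lambda>j. z (- int j - 1)"
  define B where "B n = rev (prefix (Suc n) ?l)" for n
  define T where "T n = targets E s t L (map L (B n))" for n
  have l: "?l \<in> right_paths_from E t s v"
    using left_path_of_edge_shift[OF z(1)] z(2) by simp
  have B: "finite_path E s t (B n)" "t (last (B n)) = v" for n
    using finite_path_prefix(1,2)[OF l zero_less_Suc, of n] finite_path_rev[of E s t]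
    unfolding B_def by (simp_all add: last_rev del: subseq_to_Suc)
  have labels: "map L (B n) = rev (prefix (Suc n) (\<lambda>j. (L \<circ> z) (- int j - 1)))" for n
    unfolding B_def by (simp add: rev_map subsequence_def del: upt_Suc)
  have "T n \<subseteq> T m" if "m \<le> n" for m n
  proof -
    have "prefix (Suc n) ?l = prefix (Suc m) ?l @ ?l [Suc m \<rightarrow> Suc n]"
      using subsequence_append[where i = "Suc m" and j = "n - m" and w = ?l] that by simp
    then have "B n = rev (?l [Suc m \<rightarrow> Suc n]) @ B m" unfolding B_def by simp
    then show ?thesis
      unfolding T_def using targets_append_subset[of "map L (B m)"] by (simp add: B_def)
  qed
  moreover have "finite (T 0)" unfolding T_def using finite_targets[OF assms(1)] .
  ultimately obtain N where N: "\<And>n. T N \<subseteq> T n"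
    using antitone_finite_sets_stabilize by metis
  have "finite E" using assms(1) unfolding labeled_graph_def by blast
  then have "follower_vertex E s t L u \<subseteq> follower_vertex E s t L v" if "u \<in> T N" for u
    using follower_vertex_subset_follower_point[of E u s t L "L \<circ> z"] N that z(3)
    unfolding T_def labels by blast
  then have "dominating_path E s t L (B N)"
    unfolding dominating_path_def T_def using B by simp
  then show thesis using B(2) by (rule that)
qed

section \<open>Reachability and terminal components\<close>

lemma reach_trans: "reach E s t u v \<Longrightarrow> reach E s t v w \<Longrightarrow> reach E s t u w"
  unfolding reach_def by (metis finite_path_appendI hd_append2 last_appendR finite_path_def)

lemma reach_append:
  assumes "finite_path E s t (\<gamma> @ \<rho>)" "\<gamma> \<noteq> []"
  shows "reach E s t (t (last \<gamma>)) (t (last (\<gamma> @ \<rho>)))"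
proof (cases "\<rho> = []")
  case False
  then have "finite_path E s t \<rho>" "t (last \<gamma>) = s (hd \<rho>)"
    using finite_path_append[OF assms(2) False] assms(1) by blast+
  then show ?thesis using False unfolding reach_def by auto
qed (simp add: reach_def)

lemma finite_path_extend_reach:
  assumes "finite_path E s t \<gamma>" "reach E s t (t (last \<gamma>)) w"
  obtains \<sigma> where "finite_path E s t (\<gamma> @ \<sigma>)" "t (last (\<gamma> @ \<sigma>)) = w"
proof (cases "t (last \<gamma>) = w")
  case True
  then show thesis using assms(1) that[of "[]"] by simp
next
  case False
  then obtain \<sigma> where "finite_path E s t \<sigma>" "s (hd \<sigma>) = t (last \<gamma>)" "t (last \<sigma>) = w"
    using assms(2) unfolding reach_def by blast
  moreover from this have "finite_path E s t (\<gamma> @ \<sigma>)"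
    using assms(1) by (simp add: finite_path_appendI)
  ultimately show thesis using that[of \<sigma>] unfolding finite_path_def by simp
qed

lemma reach_along_right_path:
  assumes "p \<in> right_paths_from E s t u" "a \<le> b"
  shows "reach E s t (s (p a)) (s (p b))"
proof (cases "a = b")
  case False
  then have "a < b" using assms(2) by simp
  then show ?thesis using finite_path_segment[OF assms(1)] unfolding reach_def by blast
qed (simp add: reach_def)

lemma right_path_visits_recurrent:
  assumes "labeled_graph V E s t L" "p \<in> right_paths_from E s t u"
  obtains k where "recurrent V E s t (s (p k))"
proof -
  have "range (s \<circ> p) \<subseteq> V"
    using assms unfolding labeled_graph_def right_paths_from_def by auto
  then have "finite ((s \<circ> p) ` UNIV)"
    using assms(1) finite_subset unfolding labeled_graph_def by blast
  then obtain a where "infinite {n. s (p n) = s (p a)}"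
    using pigeonhole_infinite[OF infinite_UNIV_nat] by auto
  then obtain b where b: "a < b" "s (p b) = s (p a)"
    by (metis (mono_tags, lifting) infinite_nat_iff_unbounded mem_Collect_eq)
  have "recurrent V E s t (s (p a))"
    unfolding recurrent_def
    using finite_path_segment[OF assms(2) b(1)] b(2) \<open>range (s \<circ> p) \<subseteq> V\<close> by auto
  then show thesis by (rule that)
qed

lemma terminal_component_reach_back:
  assumes "labeled_graph V E s t L" "terminal_component V E s t C" "v \<in> C" "c \<in> V"
    and "reach E s t v c"
  shows "reach E s t c v"
proof -
  obtain p where p: "p \<in> right_paths_from E s t c"
    using right_paths_from_nonempty[OF assms(1,4)] .
  then obtain k where rec: "recurrent V E s t (s (p k))"
    using right_path_visits_recurrent[OF assms(1)] by blast
  have "s (p 0) = c" using p unfolding right_paths_from_def by simp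
  then have c_r: "reach E s t c (s (p k))" using reach_along_right_path[OF p] by fastforce
  define D where "D = {w. recurrent V E s t w \<and> reach E s t (s (p k)) w \<and> reach E s t w (s (p k))}"
  have "component V E s t D" unfolding component_def D_def using rec by blast
  moreover have "s (p k) \<in> D" unfolding D_def using rec by (simp add: reach_def)
  moreover have "reach E s t v (s (p k))" using reach_trans[OF assms(5) c_r] .
  ultimately have "D = C" using assms(2,3) unfolding terminal_component_def by blast
  then have "s (p k) \<in> C" using \<open>s (p k) \<in> D\<close> by simp
  moreover obtain v\<^sub>0 where "C = {w. recurrent V E s t w \<and> reach E s t v\<^sub>0 w \<and> reach E s t w v\<^sub>0}"
    using assms(2) unfolding terminal_component_def component_def by blast
  ultimately have "reach E s t (s (p k)) v\<^sub>0" "reach E s t v\<^sub>0 v" using assms(3) by blast+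
  then show ?thesis using c_r reach_trans by metis
qed

theorem lemma2p21:
  fixes V :: "'v set" and E :: "'e set" and s t :: "'e \<Rightarrow> 'v" and L :: "'e \<Rightarrow> 'a"
    and C :: "'v set" and v :: 'v
  assumes "labeled_graph V E s t L"
    and "right_resolving E s L"
    and "regular_graph V E s t L"
    and "follower_separated V E s t L"
    and "terminal_component V E s t C"
    and "v \<in> C"
  shows "\<exists>\<gamma>. finite_path E s t \<gamma> \<and> t (last \<gamma>) = v \<and>
           synchronizing (label_shift E s t L) (map L \<gamma>)"
proof -
  have "v \<in> V"
    using assms(5,6) unfolding terminal_component_def component_def recurrent_def by blast
  then obtain \<gamma>\<^sub>0 where \<gamma>\<^sub>0: "dominating_path E s t L \<gamma>\<^sub>0" "t (last \<gamma>\<^sub>0) = v"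
    using regular_vertex_dominating_path[OF assms(1)] assms(3) unfolding regular_graph_def by metis
  then obtain \<rho> where \<gamma>\<^sub>1: "finite_path E s t (\<gamma>\<^sub>0 @ \<rho>)"
    "targets E s t L (map L (\<gamma>\<^sub>0 @ \<rho>)) = {t (last (\<gamma>\<^sub>0 @ \<rho>))}"
    using dominating_path_extends_to_single_target[OF assms(1,2,4)] by blast
  let ?c = "t (last (\<gamma>\<^sub>0 @ \<rho>))"
  have "\<gamma>\<^sub>0 \<noteq> []" using \<gamma>\<^sub>0(1) unfolding dominating_path_def finite_path_def by simp
  then have "reach E s t v ?c" using reach_append[OF \<gamma>\<^sub>1(1)] \<gamma>\<^sub>0(2) by simp
  moreover have "?c \<in> V" using targets_subset_vertices[OF assms(1)] \<gamma>\<^sub>1(2) by blast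
  ultimately have "reach E s t ?c v"
    using terminal_component_reach_back[OF assms(1,5,6)] by blast
  then obtain \<sigma> where \<gamma>: "finite_path E s t (\<gamma>\<^sub>0 @ \<rho> @ \<sigma>)" "t (last (\<gamma>\<^sub>0 @ \<rho> @ \<sigma>)) = v"
    using finite_path_extend_reach[OF \<gamma>\<^sub>1(1)] by (metis append_assoc)
  then have "targets E s t L (map L (\<gamma>\<^sub>0 @ \<rho> @ \<sigma>)) = {v}"
    using single_target_append[OF assms(2), where \<gamma> = "\<gamma>\<^sub>0 @ \<rho>" and \<delta> = \<sigma>] \<gamma>\<^sub>1(2) \<open>\<gamma>\<^sub>0 \<noteq> []\<close> by simp
  then have "synchronizing (label_shift E s t L) (map L (\<gamma>\<^sub>0 @ \<rho> @ \<sigma>))"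
    using synchronizing_if_single_target[OF assms(1) \<gamma>(1)] \<gamma>(2) by simp
  then show ?thesis using \<gamma> by blast
qed

end
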